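(* Fix $N$ and $T$, and assume that for every $t\in[0,T_N)_N$ and $x\in\mathbf R^n$, $H^N(t+N^{-1},x)$ is invertible, every component of $h^N(t,x)H^N(t+N^{-1},x)^{-1}$ is strictly positive, and the sum $A^N(t,x)$ of these components satisfies $A^N(t,x)<1$. Let $\Psi^N:\mathbf R^n\to\mathbf R$ and $g^N:(0,T_N]_N\times\mathbf R^n\to\mathbf R$ be bounded, and let $u^N:[0,T_N]_N\times\mathbf R^n\to\mathbf R$ satisfy $u^N(T_N,\cdot)=\Psi^N$ and $$\partial^N_tu^N+\tfrac12\Delta^Nu^N-\langle b^N,\nabla^Nu^N\rangle-c^N(1^Nu^N)=g^N\quad\text{on }(0,T_N]_N\times\mathbf R^n.$$ Then for every $t\in[0,T_N]_N$, $$\sup_{x\in\mathbf R^n}|u^N(t,x)|\le\sup_{y}|\Psi^N(y)|+(T_N-t)\sup_{s\in(t,T_N]_N,\,y\in\mathbf R^n}|g^N(s,y)|.$$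
   Context: Fix $n\ge1$ and a real orthogonal $(n+1)\times(n+1)$ matrix $(e_{i,j})_{0\le i,j\le n}$ with $e_{0,j}>0$ for all $j$; put $e_j=\frac{1}{e_{0,j}}(e_{1,j},\dots,e_{n,j})\in\mathbf R^n$. For $N\in\mathbf N$, $T_N=[TN]/N$ and, for an interval $I\subset[0,\infty)$, $I_N=I\cap\{k/N:k\in\mathbf Z_{\ge0}\}$. Difference operators (acting on functions of $(t,x)$, componentwise on vectors): $\partial^N_kf(t,x)=\sqrt N\sum_{j=0}^nf(t,x+N^{-1/2}e_j)e_{0,j}e_{k,j}$ ($k=1,\dots,n$), $\nabla^N=(\partial^N_1,\dots,\partial^N_n)$, $\Delta^Nf(t,x)=2N\sum_{j=0}^n\{f(t,x+N^{-1/2}e_j)-f(t,x)\}e_{0,j}^2$, $\partial^N_tf(t,x)=N(f(t,x)-f(t-N^{-1},x))$, $1^Nf(t,x)=f(t-N^{-1},x)$. Market data: functions $h^{i,N}:[0,T]_N\times\mathbf R^n\to\mathbf R$, $i=0,\dots,n$, forming the row vector $h^N=(h^{0,N},\dots,h^{n,N})$; $H^N(t,x)$ is the $(n+1)\times(n+1)$ matrix whose entry in row $j$, column $i$ is $h^{i,N}(t,x+N^{-1/2}e_j)$. $\Sigma^N(t,x)$ is the $(n+1)\times(n+1)$ matrix whose first row is $(h^{0,N}(t-N^{-1},x),\dots,h^{n,N}(t-N^{-1},x))$ and whose row $k$ ($k=1,\dots,n$) is $(\partial^N_kh^{0,N}(t,x),\dots,\partial^N_kh^{n,N}(t,x))$;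 under the stated assumptions it is invertible for $t\in(0,T_N]_N$. $(c^N(t,x),b^N(t,x)):=\big(\partial^N_th^N+\tfrac12\Delta^Nh^N\big)(t,x)[\Sigma^N(t,x)]^{-1}\in\mathbf R^{1+n}$, $c^N$ being the first entry and $b^N\in\mathbf R^n$ the rest. *)

theory Defs
  imports "HOL-Analysis.Analysis"
begin

text \<open>Indices 0..n of the (n+1)x(n+1) matrices are modelled by the type 'n option,
  None standing for 0 and Some k for k = 1..n; R^n is real^'n.\<close>

definition grid :: "nat \<Rightarrow> real set" where
  "grid N = {real k / real N | k. True}"

definition TN :: "nat \<Rightarrow> real \<Rightarrow> real" where
  "TN N T = of_int \<lfloor>T * real N\<rfloor> / real N"

definition evec :: "real^('n::finite option)^('n option) \<Rightarrow> 'n option \<Rightarrow> real^'n" where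
  "evec e j = (\<chi> k. e $ Some k $ j / e $ None $ j)"

definition shift :: "real^('n::finite option)^('n option) \<Rightarrow> nat \<Rightarrow> real^'n \<Rightarrow> 'n option \<Rightarrow> real^'n" where
  "shift e N x j = x + (1 / sqrt (real N)) *\<^sub>R evec e j"

definition dpart :: "real^('n::finite option)^('n option) \<Rightarrow> nat \<Rightarrow> (real \<Rightarrow> real^'n \<Rightarrow> 'v::real_vector)
    \<Rightarrow> real \<Rightarrow> real^'n \<Rightarrow> 'n \<Rightarrow> 'v" where
  "dpart e N f t x k = sqrt (real N) *\<^sub>R
     (\<Sum>j\<in>UNIV. (e $ None $ j * e $ Some k $ j) *\<^sub>R f t (shift e N x j))"

definition grad :: "real^('n::finite option)^('n option) \<Rightarrow> nat \<Rightarrow> (real \<Rightarrow> real^'n \<Rightarrow> real)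
    \<Rightarrow> real \<Rightarrow> real^'n \<Rightarrow> real^'n" where
  "grad e N f t x = (\<chi> k. dpart e N f t x k)"

definition lap :: "real^('n::finite option)^('n option) \<Rightarrow> nat \<Rightarrow> (real \<Rightarrow> real^'n \<Rightarrow> 'v::real_vector)
    \<Rightarrow> real \<Rightarrow> real^'n \<Rightarrow> 'v" where
  "lap e N f t x = (2 * real N) *\<^sub>R
     (\<Sum>j\<in>UNIV. (e $ None $ j)\<^sup>2 *\<^sub>R (f t (shift e N x j) - f t x))"

definition dt :: "nat \<Rightarrow> (real \<Rightarrow> 'x \<Rightarrow> 'v::real_vector) \<Rightarrow> real \<Rightarrow> 'x \<Rightarrow> 'v" where
  "dt N f t x = real N *\<^sub>R (f t x - f (t - 1 / real N) x)"

definition Hmat :: "real^('n::finite option)^('n option) \<Rightarrow> nat \<Rightarrow> (real \<Rightarrow> real^'n \<Rightarrow> real^('n option))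
    \<Rightarrow> real \<Rightarrow> real^'n \<Rightarrow> real^('n option)^('n option)" where
  "Hmat e N h t x = (\<chi> j. h t (shift e N x j))"

definition Sigma_mat :: "real^('n::finite option)^('n option) \<Rightarrow> nat \<Rightarrow> (real \<Rightarrow> real^'n \<Rightarrow> real^('n option))
    \<Rightarrow> real \<Rightarrow> real^'n \<Rightarrow> real^('n option)^('n option)" where
  "Sigma_mat e N h t x = (\<chi> r. case r of None \<Rightarrow> h (t - 1 / real N) x | Some k \<Rightarrow> dpart e N h t x k)"

definition cb :: "real^('n::finite option)^('n option) \<Rightarrow> nat \<Rightarrow> (real \<Rightarrow> real^'n \<Rightarrow> real^('n option))
    \<Rightarrow> real \<Rightarrow> real^'n \<Rightarrow> real^('n option)" where
  "cb e N h t x = (dt N h t x + (1/2) *\<^sub>R lap e N h t x) v* matrix_inv (Sigma_mat e N h t x)"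

definition cN :: "real^('n::finite option)^('n option) \<Rightarrow> nat \<Rightarrow> (real \<Rightarrow> real^'n \<Rightarrow> real^('n option))
    \<Rightarrow> real \<Rightarrow> real^'n \<Rightarrow> real" where
  "cN e N h t x = cb e N h t x $ None"

definition bN :: "real^('n::finite option)^('n option) \<Rightarrow> nat \<Rightarrow> (real \<Rightarrow> real^'n \<Rightarrow> real^('n option))
    \<Rightarrow> real \<Rightarrow> real^'n \<Rightarrow> real^'n" where
  "bN e N h t x = (\<chi> k. cb e N h t x $ Some k)"

end

theory Submission
  imports Defs
begin

(* Rewrite the scheme at a grid point t as an explicit relation between u(t - 1/N, x) and the
  values u(t, x_j), x_j = x + N^(-1/2) e_j.  Because c and b are chosen so that every component
  of the price vector h solves the homogeneous scheme, the coefficients of this relation are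
  the state prices q = h(t - 1/N, x) H(t, x)^(-1):
    u(t - 1/N, x) = sum_j q_j u(t, x_j) - (A/N) g(t, x),   A = sum_j q_j.
  With q_j > 0 and A < 1 each backward step raises the sup norm of u by at most sup |g| / N,
  and there are N (T_N - t) steps from t to T_N. *)

lemma sum_UNIV_option:
  fixes f :: "'n::finite option \<Rightarrow> 'a::comm_monoid_add"
  shows "(\<Sum>r\<in>UNIV. f r) = f None + (\<Sum>k\<in>UNIV. f (Some k))"
proof -
  have "(\<Sum>r\<in>UNIV. f r) = f None + (\<Sum>r\<in>range Some. f r)"
    by (subst UNIV_option_conv, subst sum.insert) auto
  also have "(\<Sum>r\<in>range Some. f r) = (\<Sum>k\<in>UNIV. f (Some k))"
    by (subst sum.reindex) (auto simp: inj_on_def)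
  finally show ?thesis .
qed

lemma vector_matrix_inv_mult:
  fixes A :: "real^'n^'n"
  assumes "invertible A"
  shows "(v v* matrix_inv A) v* A = v"
proof -
  have "matrix_inv A ** A = mat 1"
    using assms unfolding invertible_def matrix_inv_def by (rule someI2_ex) auto
  then show ?thesis by (simp add: vector_matrix_mul_assoc)
qed

lemma vector_matrix_mult_inv:
  fixes A :: "real^'n^'n"
  assumes "invertible A"
  shows "(v v* A) v* matrix_inv A = v"
proof -
  have "A ** matrix_inv A = mat 1"
    using assms unfolding invertible_def matrix_inv_def by (rule someI2_ex) auto
  then show ?thesis by (simp add: vector_matrix_mul_assoc)
qed

lemma orthogonal_matrix_rows_inner:
  fixes e :: "real^'m^'m"
  assumes "orthogonal_matrix e"
  shows "(\<Sum>j\<in>UNIV. e$a$j * e$b$j) = (if a = b then 1 else 0)"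
proof -
  have "(e ** transpose e)$a$b = mat 1 $a$b"
    using assms by (simp add: orthogonal_matrix_def)
  then show ?thesis by (simp add: matrix_matrix_mult_def transpose_def mat_def)
qed

lemma orthogonal_matrix_row_sum_squares:
  fixes e :: "real^'m^'m"
  assumes "orthogonal_matrix e"
  shows "(\<Sum>j\<in>UNIV. (e$a$j)^2) = 1"
  using orthogonal_matrix_rows_inner[OF assms, of a a] by (simp add: power2_eq_square)

lemma orthogonal_matrix_columns_inner:
  fixes e :: "real^'m^'m"
  assumes "orthogonal_matrix e"
  shows "(\<Sum>r\<in>UNIV. e$r$i * e$r$j) = (if i = j then 1 else 0)"
proof -
  have "(transpose e ** e)$i$j = mat 1 $i$j"
    using assms by (simp add: orthogonal_matrix_def)
  then show ?thesis by (simp add: matrix_matrix_mult_def transpose_def mat_def)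
qed

lemma orthogonal_matrix_multiple_of_row:
  fixes e :: "real^'m^'m" and z :: "'m \<Rightarrow> real"
  assumes "orthogonal_matrix e" and "\<And>r. r \<noteq> a \<Longrightarrow> (\<Sum>i\<in>UNIV. e$r$i * z i) = 0"
  shows "z j = e$a$j * (\<Sum>i\<in>UNIV. e$a$i * z i)"
proof -
  have "z j = (\<Sum>i\<in>UNIV. z i * (if i = j then 1 else 0))"
    by (simp add: if_distrib cong: if_cong)
  also have "\<dots> = (\<Sum>i\<in>UNIV. z i * (\<Sum>r\<in>UNIV. e$r$i * e$r$j))"
    using orthogonal_matrix_columns_inner[OF assms(1)] by simp
  also have "\<dots> = (\<Sum>i\<in>UNIV. \<Sum>r\<in>UNIV. e$r$j * (e$r$i * z i))"
    by (simp add: sum_distrib_left mult_ac)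
  also have "\<dots> = (\<Sum>r\<in>UNIV. e$r$j * (\<Sum>i\<in>UNIV. e$r$i * z i))"
    by (subst sum.swap) (simp add: sum_distrib_left)
  also have "\<dots> = e$a$j * (\<Sum>i\<in>UNIV. e$a$i * z i)"
    using assms(2) by (subst sum.remove[of _ a]) auto
  finally show ?thesis .
qed

definition scheme_weight :: "real^('n::finite option)^('n option) \<Rightarrow> nat \<Rightarrow> real^'n
    \<Rightarrow> 'n option \<Rightarrow> real"
  where "scheme_weight e N b j =
    real N * (e$None$j)^2 - sqrt (real N) * e$None$j * (\<Sum>k\<in>UNIV. b$k * e$Some k$j)"

lemma scheme_eq_weighted_sum:
  fixes e :: "real^('n::finite option)^('n option)" and f :: "real \<Rightarrow> real^'n \<Rightarrow> real"
  assumes "(\<Sum>j\<in>UNIV. (e$None$j)^2) = 1"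
  shows "dt N f t x + (1/2) * lap e N f t x - b \<bullet> grad e N f t x - c * f (t - 1/real N) x
     = (\<Sum>j\<in>UNIV. scheme_weight e N b j * f t (shift e N x j)) - (real N + c) * f (t - 1/real N) x"
proof -
  let ?f = "\<lambda>j. f t (shift e N x j)"
  have lap: "(1/2) * lap e N f t x = real N * (\<Sum>j\<in>UNIV. (e$None$j)^2 * ?f j) - real N * f t x"
  proof -
    have "(1/2) * lap e N f t x = real N * (\<Sum>j\<in>UNIV. (e$None$j)^2 * ?f j - (e$None$j)^2 * f t x)"
      by (simp add: lap_def right_diff_distrib)
    also have "\<dots> = real N * (\<Sum>j\<in>UNIV. (e$None$j)^2 * ?f j) - real N * f t x"
      by (simp add: sum_subtractf sum_distrib_right[symmetric] assms right_diff_distrib)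
    finally show ?thesis .
  qed
  have grad: "b \<bullet> grad e N f t x
      = (\<Sum>j\<in>UNIV. sqrt (real N) * e$None$j * (\<Sum>k\<in>UNIV. b$k * e$Some k$j) * ?f j)"
  proof -
    have "b \<bullet> grad e N f t x
        = (\<Sum>k\<in>UNIV. \<Sum>j\<in>UNIV. sqrt (real N) * e$None$j * (b$k * e$Some k$j) * ?f j)"
      by (simp add: inner_vec_def grad_def dpart_def sum_distrib_left mult_ac)
    also have "\<dots> = (\<Sum>j\<in>UNIV. \<Sum>k\<in>UNIV. sqrt (real N) * e$None$j * (b$k * e$Some k$j) * ?f j)"
      by (rule sum.swap)
    also have "\<dots> = (\<Sum>j\<in>UNIV. sqrt (real N) * e$None$j * (\<Sum>k\<in>UNIV. b$k * e$Some k$j) * ?f j)"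
      by (simp add: sum_distrib_left sum_distrib_right)
    finally show ?thesis .
  qed
  have "(\<Sum>j\<in>UNIV. scheme_weight e N b j * ?f j)
     = real N * (\<Sum>j\<in>UNIV. (e$None$j)^2 * ?f j)
       - (\<Sum>j\<in>UNIV. sqrt (real N) * e$None$j * (\<Sum>k\<in>UNIV. b$k * e$Some k$j) * ?f j)"
    by (simp add: scheme_weight_def left_diff_distrib sum_subtractf sum_distrib_left mult.assoc)
  then show ?thesis
    unfolding lap grad by (simp add: dt_def algebra_simps)
qed

lemma sum_scheme_weight:
  fixes e :: "real^('n::finite option)^('n option)"
  assumes "orthogonal_matrix e"
  shows "(\<Sum>j\<in>UNIV. scheme_weight e N b j) = real N"
proof -
  have "(\<Sum>j\<in>UNIV. scheme_weight e N b j) = real N * (\<Sum>j\<in>UNIV. e$None$j * e$None$j)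
      - (\<Sum>j\<in>UNIV. \<Sum>k\<in>UNIV. sqrt (real N) * (b$k * (e$None$j * e$Some k$j)))"
    by (simp add: scheme_weight_def power2_eq_square sum_subtractf sum_distrib_left mult_ac)
  also have "(\<Sum>j\<in>UNIV. \<Sum>k\<in>UNIV. sqrt (real N) * (b$k * (e$None$j * e$Some k$j)))
      = sqrt (real N) * (\<Sum>k\<in>UNIV. b$k * (\<Sum>j\<in>UNIV. e$None$j * e$Some k$j))"
    by (subst sum.swap) (simp add: sum_distrib_left)
  finally show ?thesis
    by (simp add: orthogonal_matrix_rows_inner[OF assms])
qed

definition state_prices :: "real^('n::finite option)^('n option) \<Rightarrow> nat
    \<Rightarrow> (real \<Rightarrow> real^'n \<Rightarrow> real^('n option)) \<Rightarrow> real \<Rightarrow> real^'n \<Rightarrow> real^('n option)"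
  where "state_prices e N h t x = h (t - 1 / real N) x v* matrix_inv (Hmat e N h t x)"

definition Sigma_factor :: "real^('n::finite option)^('n option) \<Rightarrow> nat \<Rightarrow> real^('n option)
    \<Rightarrow> real^('n option)^('n option)"
  where "Sigma_factor e N q =
    (\<chi> r. case r of None \<Rightarrow> q | Some k \<Rightarrow> (\<chi> j. sqrt (real N) * (e$None$j * e$Some k$j)))"

lemma Sigma_mat_eq_factor_mult_Hmat:
  assumes "invertible (Hmat e N h t x)"
  shows "Sigma_mat e N h t x = Sigma_factor e N (state_prices e N h t x) ** Hmat e N h t x"
proof -
  define q where "q = state_prices e N h t x"
  have prices: "h (t - 1 / real N) x = q v* Hmat e N h t x"
    unfolding q_def state_prices_def using vector_matrix_inv_mult[OF assms] by simp
  have "Sigma_mat e N h t x $ r $ i = (Sigma_factor e N q ** Hmat e N h t x) $ r $ i" for r i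
  proof (cases r)
    case None
    then show ?thesis
      by (simp add: Sigma_mat_def Sigma_factor_def prices matrix_matrix_mult_def vector_matrix_mult_def)
  next
    case (Some k)
    then show ?thesis
      by (simp add: Sigma_mat_def Sigma_factor_def dpart_def Hmat_def matrix_matrix_mult_def
          sum_distrib_left mult_ac)
  qed
  then show ?thesis
    unfolding q_def by (simp add: vec_eq_iff)
qed

lemma invertible_Sigma_factor:
  fixes e :: "real^('n::finite option)^('n option)"
  assumes orth: "orthogonal_matrix e" and "\<forall>j. e$None$j \<noteq> 0" and "0 < N"
    and "(\<Sum>j\<in>UNIV. q$j) \<noteq> 0"
  shows "invertible (Sigma_factor e N q)"
  unfolding invertible_left_inverse matrix_left_invertible_ker
proof (intro allI impI)
  fix y assume ker: "Sigma_factor e N q *v y = 0"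
  define \<alpha> where "\<alpha> = (\<Sum>i\<in>UNIV. e$None$i * (e$None$i * y$i))"
  have perp: "(\<Sum>j\<in>UNIV. e$r$j * (e$None$j * y$j)) = 0" if "r \<noteq> None" for r
  proof -
    obtain k where r: "r = Some k" using \<open>r \<noteq> None\<close> by blast
    have "sqrt (real N) * (\<Sum>j\<in>UNIV. e$Some k$j * (e$None$j * y$j))
        = (Sigma_factor e N q *v y)$Some k"
      by (simp add: Sigma_factor_def matrix_vector_mult_def sum_distrib_left mult_ac)
    then show ?thesis using ker \<open>0 < N\<close> r by simp
  qed
  have "e$None$j * y$j = e$None$j * \<alpha>" for j
    unfolding \<alpha>_def
    by (rule orthogonal_matrix_multiple_of_row[OF orth, where z = "\<lambda>j. e$None$j * y$j", OF perp])
  then have y_const: "y$j = \<alpha>" for j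
    using assms(2) by simp
  have "(\<Sum>j\<in>UNIV. q$j) * \<alpha> = (Sigma_factor e N q *v y)$None"
    by (simp add: Sigma_factor_def matrix_vector_mult_def y_const sum_distrib_right)
  then have "\<alpha> = 0" using ker assms(4) by simp
  then show "y = 0" by (simp add: vec_eq_iff y_const)
qed

lemma invertible_Sigma_mat:
  fixes e :: "real^('n::finite option)^('n option)"
  assumes "orthogonal_matrix e" and "\<forall>j. e$None$j \<noteq> 0" and "0 < N"
    and "invertible (Hmat e N h t x)" and "(\<Sum>j\<in>UNIV. state_prices e N h t x $ j) \<noteq> 0"
  shows "invertible (Sigma_mat e N h t x)"
  using invertible_mult[OF invertible_Sigma_factor assms(4)] assms
    Sigma_mat_eq_factor_mult_Hmat[OF assms(4)] by simp

lemma price_components_solve_scheme: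
  assumes "invertible (Sigma_mat e N h t x)"
  shows "dt N (\<lambda>s y. h s y $ i) t x + (1/2) * lap e N (\<lambda>s y. h s y $ i) t x
      - bN e N h t x \<bullet> grad e N (\<lambda>s y. h s y $ i) t x - cN e N h t x * h (t - 1 / real N) x $ i = 0"
proof -
  have "cb e N h t x v* Sigma_mat e N h t x = dt N h t x + (1/2) *\<^sub>R lap e N h t x"
    unfolding cb_def using vector_matrix_inv_mult[OF assms] by simp
  then have "(cb e N h t x v* Sigma_mat e N h t x) $ i = (dt N h t x + (1/2) *\<^sub>R lap e N h t x) $ i"
    by simp
  then show ?thesis
    by (simp add: vector_matrix_mult_def sum_UNIV_option Sigma_mat_def cN_def bN_def inner_vec_def
        grad_def dpart_def dt_def lap_def)
qed

lemma scheme_weight_eq_state_prices: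
  fixes e :: "real^('n::finite option)^('n option)"
  assumes "orthogonal_matrix e" and "invertible (Hmat e N h t x)"
    and "invertible (Sigma_mat e N h t x)"
  shows "scheme_weight e N (bN e N h t x) j = (real N + cN e N h t x) * state_prices e N h t x $ j"
proof -
  define w where "w = (\<chi> j. scheme_weight e N (bN e N h t x) j)"
  define c where "c = cN e N h t x"
  have "(w v* Hmat e N h t x) $ i = (real N + c) * h (t - 1 / real N) x $ i" for i
    using scheme_eq_weighted_sum[OF orthogonal_matrix_row_sum_squares[OF assms(1)],
        of N "\<lambda>s y. h s y $ i" t x "bN e N h t x" c]
      price_components_solve_scheme[OF assms(3), of i]
    by (simp add: w_def c_def vector_matrix_mult_def Hmat_def)
  then have "w v* Hmat e N h t x = (real N + c) *\<^sub>R h (t - 1 / real N) x"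
    by (simp add: vec_eq_iff)
  then have "w = ((real N + c) *\<^sub>R h (t - 1 / real N) x) v* matrix_inv (Hmat e N h t x)"
    using vector_matrix_mult_inv[OF assms(2), of w] by simp
  then have "w $ j = (real N + c) * state_prices e N h t x $ j"
    by (simp add: state_prices_def vector_matrix_mult_def sum_distrib_left mult.assoc)
  then show ?thesis by (simp add: w_def c_def)
qed

lemma discount_mult_sum_state_prices:
  fixes e :: "real^('n::finite option)^('n option)"
  assumes "orthogonal_matrix e" and "invertible (Hmat e N h t x)"
    and "invertible (Sigma_mat e N h t x)"
  shows "(real N + cN e N h t x) * (\<Sum>j\<in>UNIV. state_prices e N h t x $ j) = real N"
  using sum_scheme_weight[OF assms(1), of N "bN e N h t x"] scheme_weight_eq_state_prices[OF assms]
  by (simp add: sum_distrib_left)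

lemma scheme_backward_step:
  fixes e :: "real^('n::finite option)^('n option)"
  assumes orth: "orthogonal_matrix e" and "\<forall>j. e$None$j \<noteq> 0" and "0 < N"
    and H: "invertible (Hmat e N h t x)" and "(\<Sum>j\<in>UNIV. state_prices e N h t x $ j) \<noteq> 0"
    and scheme: "dt N u t x + (1/2) * lap e N u t x - bN e N h t x \<bullet> grad e N u t x
      - cN e N h t x * u (t - 1 / real N) x = r"
  shows "u (t - 1 / real N) x = (\<Sum>j\<in>UNIV. state_prices e N h t x $ j * u t (shift e N x j))
      - (\<Sum>j\<in>UNIV. state_prices e N h t x $ j) / real N * r"
proof -
  define q where "q = state_prices e N h t x"
  define c where "c = cN e N h t x"
  have \<Sigma>: "invertible (Sigma_mat e N h t x)"
    by (rule invertible_Sigma_mat) (use assms in auto)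
  have discount: "(real N + c) * (\<Sum>j\<in>UNIV. q $ j) = real N"
    unfolding q_def c_def by (rule discount_mult_sum_state_prices[OF orth H \<Sigma>])
  have "r = (\<Sum>j\<in>UNIV. scheme_weight e N (bN e N h t x) j * u t (shift e N x j))
      - (real N + c) * u (t - 1 / real N) x"
    using scheme scheme_eq_weighted_sum[OF orthogonal_matrix_row_sum_squares[OF orth]]
    unfolding c_def by simp
  also have "\<dots> = (real N + c) * ((\<Sum>j\<in>UNIV. q $ j * u t (shift e N x j)) - u (t - 1 / real N) x)"
    unfolding scheme_weight_eq_state_prices[OF orth H \<Sigma>] q_def c_def
    by (simp add: sum_distrib_left right_diff_distrib mult_ac)
  finally have "r * (\<Sum>j\<in>UNIV. q $ j)
      = real N * ((\<Sum>j\<in>UNIV. q $ j * u t (shift e N x j)) - u (t - 1 / real N) x)"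
    using discount by (simp add: mult_ac)
  then show ?thesis
    using \<open>0 < N\<close> unfolding q_def by (simp add: field_simps)
qed

lemma abs_weighted_sum_minus_le:
  fixes q v :: "'i::finite \<Rightarrow> real"
  assumes "\<forall>j. 0 \<le> q j" and "(\<Sum>j\<in>UNIV. q j) \<le> 1" and "\<forall>j. \<bar>v j\<bar> \<le> B"
  shows "\<bar>(\<Sum>j\<in>UNIV. q j * v j) - (\<Sum>j\<in>UNIV. q j) * r\<bar> \<le> B + \<bar>r\<bar>"
proof -
  have "\<bar>(\<Sum>j\<in>UNIV. q j * v j) - (\<Sum>j\<in>UNIV. q j) * r\<bar> = \<bar>\<Sum>j\<in>UNIV. q j * (v j - r)\<bar>"
    by (simp add: sum_distrib_right right_diff_distrib sum_subtractf)
  also have "\<dots> \<le> (\<Sum>j\<in>UNIV. q j * (B + \<bar>r\<bar>))"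
  proof (rule order_trans[OF sum_abs sum_mono])
    fix j
    have "\<bar>v j - r\<bar> \<le> B + \<bar>r\<bar>"
      using spec[OF assms(3), of j] abs_triangle_ineq4[of "v j" r] by linarith
    then show "\<bar>q j * (v j - r)\<bar> \<le> q j * (B + \<bar>r\<bar>)"
      using assms(1) by (simp add: abs_mult mult_left_mono)
  qed
  also have "\<dots> = (\<Sum>j\<in>UNIV. q j) * (B + \<bar>r\<bar>)"
    by (simp add: sum_distrib_right)
  also have "\<dots> \<le> B + \<bar>r\<bar>"
  proof (rule mult_left_le_one_le)
    show "0 \<le> B + \<bar>r\<bar>"
      using assms(3) by (meson abs_ge_zero add_nonneg_nonneg order_trans)
  qed (use assms sum_nonneg[of UNIV q] in auto)
  finally show ?thesis .
qed

lemma abs_scheme_backward_step_le: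
  fixes e :: "real^('n::finite option)^('n option)"
  assumes "orthogonal_matrix e" and "\<forall>j. 0 < e$None$j" and "0 < N"
    and "invertible (Hmat e N h t x)"
    and q_pos: "\<forall>j. 0 < state_prices e N h t x $ j"
    and q_sum: "(\<Sum>j\<in>UNIV. state_prices e N h t x $ j) < 1"
    and "dt N u t x + (1/2) * lap e N u t x - bN e N h t x \<bullet> grad e N u t x
      - cN e N h t x * u (t - 1 / real N) x = r"
    and "\<forall>y. \<bar>u t y\<bar> \<le> B"
  shows "\<bar>u (t - 1 / real N) x\<bar> \<le> B + \<bar>r\<bar> / real N"
proof -
  have "(\<Sum>j\<in>UNIV. state_prices e N h t x $ j) \<noteq> 0"
    using sum_pos[of UNIV "\<lambda>j. state_prices e N h t x $ j"] q_pos by force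
  then have "u (t - 1 / real N) x = (\<Sum>j\<in>UNIV. state_prices e N h t x $ j * u t (shift e N x j))
      - (\<Sum>j\<in>UNIV. state_prices e N h t x $ j) * (r / real N)"
    using scheme_backward_step[of e N h t x u r] assms by (simp add: less_imp_neq[symmetric])
  also have "\<bar>\<dots>\<bar> \<le> B + \<bar>r / real N\<bar>"
    using q_pos q_sum assms(8) by (intro abs_weighted_sum_minus_le) (auto simp: less_imp_le)
  finally show ?thesis by simp
qed

lemma backward_recursion_bound:
  fixes v :: "nat \<Rightarrow> 'a \<Rightarrow> real"
  assumes "k \<le> M" and "\<forall>x. \<bar>v M x\<bar> \<le> S"
    and "\<And>j B x. k \<le> j \<Longrightarrow> j < M \<Longrightarrow> \<forall>y. \<bar>v (Suc j) y\<bar> \<le> B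
      \<Longrightarrow> \<bar>v j x\<bar> \<le> B + \<gamma>"
  shows "\<bar>v k x\<bar> \<le> S + real (M - k) * \<gamma>"
proof -
  have "\<forall>x. \<bar>v k x\<bar> \<le> S + real (M - k) * \<gamma>"
    using assms(1)
  proof (induction k rule: inc_induct)
    case base
    then show ?case using assms(2) by simp
  next
    case (step j)
    then have "\<bar>v j x\<bar> \<le> S + real (M - Suc j) * \<gamma> + \<gamma>" for x
      using assms(1,3) by simp
    moreover have "real (M - Suc j) * \<gamma> + \<gamma> = real (M - j) * \<gamma>"
      using step.hyps(2) by (simp add: Suc_diff_Suc algebra_simps)
    ultimately show ?case by (simp add: add.assoc)
  qed
  then show ?thesis by blast
qed

lemma abs_le_SUP_of_bounded:
  fixes f :: "'a \<Rightarrow> real"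
  assumes "bounded (f ` A)" and "B \<subseteq> A" and "p \<in> B"
  shows "\<bar>f p\<bar> \<le> (SUP q\<in>B. \<bar>f q\<bar>)"
proof -
  have "bounded ((\<lambda>q. norm (f q)) ` B)"
    using bounded_subset[OF assms(1) image_mono[OF assms(2)]] by (simp only: bounded_norm_comp)
  then show ?thesis
    using assms(3) by (intro cSUP_upper bounded_imp_bdd_above) auto
qed

lemma grid_TN_index:
  assumes "0 < N" and "t \<in> grid N \<inter> {0..TN N T}"
  obtains k M :: nat where "t = real k / real N" and "TN N T = real M / real N" and "k \<le> M"
proof -
  obtain k :: nat where t: "t = real k / real N"
    using assms(2) unfolding grid_def by blast
  define M where "M = nat \<lfloor>T * real N\<rfloor>"
  have "0 \<le> TN N T" using assms(2) by simp
  then have "0 \<le> \<lfloor>T * real N\<rfloor>"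
    using assms(1) unfolding TN_def by (simp add: zero_le_divide_iff)
  then have TM: "TN N T = real M / real N"
    unfolding TN_def M_def by simp
  then have "k \<le> M"
    using assms t by (simp add: divide_le_cancel)
  with t TM that show ?thesis by blast
qed

lemma of_nat_divide_mem_grid: "real k / real N \<in> grid N"
  unfolding grid_def by blast

lemma add_inverse_mem_grid:
  assumes "s \<in> grid N"
  shows "s + 1 / real N \<in> grid N"
proof -
  obtain k :: nat where "s = real k / real N"
    using assms unfolding grid_def by blast
  then have "s + 1 / real N = real (Suc k) / real N"
    by (simp add: add_divide_distrib)
  then show ?thesis by (simp only: of_nat_divide_mem_grid)
qed

lemma abs_scheme_grid_step_le:
  fixes e :: "real^('n::finite option)^('n option)"
  assumes "orthogonal_matrix e" and "\<forall>j. 0 < e $ None $ j" and "0 < N"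
    and "\<forall>t\<in>grid N \<inter> {0..<TN N T}. \<forall>x.
           invertible (Hmat e N h (t + 1 / real N) x) \<and>
           (\<forall>i. 0 < (h t x v* matrix_inv (Hmat e N h (t + 1 / real N) x)) $ i) \<and>
           (\<Sum>i\<in>UNIV. (h t x v* matrix_inv (Hmat e N h (t + 1 / real N) x)) $ i) < 1"
    and "\<forall>t\<in>grid N \<inter> {0<..TN N T}. \<forall>x.
           dt N u t x + (1/2) * lap e N u t x - bN e N h t x \<bullet> grad e N u t x
           - cN e N h t x * u (t - 1 / real N) x = g t x"
    and "s \<in> grid N" and "0 \<le> s" and "s + 1 / real N \<le> TN N T"
    and "\<forall>y. \<bar>u (s + 1 / real N) y\<bar> \<le> B"
  shows "\<bar>u s x\<bar> \<le> B + \<bar>g (s + 1 / real N) x\<bar> / real N"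
proof -
  have "0 < 1 / real N" using assms(3) by simp
  then have "s < TN N T" and "0 < s + 1 / real N"
    using assms(7,8) by linarith+
  then have s_mem: "s \<in> grid N \<inter> {0..<TN N T}"
    and s_succ_mem: "s + 1 / real N \<in> grid N \<inter> {0<..TN N T}"
    using assms(6-8) add_inverse_mem_grid[OF assms(6)] by auto
  have "invertible (Hmat e N h (s + 1 / real N) x)
        \<and> (\<forall>i. 0 < state_prices e N h (s + 1 / real N) x $ i)
        \<and> (\<Sum>i\<in>UNIV. state_prices e N h (s + 1 / real N) x $ i) < 1"
    using assms(4) s_mem unfolding state_prices_def by auto
  moreover have "dt N u (s + 1 / real N) x + (1/2) * lap e N u (s + 1 / real N) x
        - bN e N h (s + 1 / real N) x \<bullet> grad e N u (s + 1 / real N) x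
        - cN e N h (s + 1 / real N) x * u (s + 1 / real N - 1 / real N) x = g (s + 1 / real N) x"
    using assms(5) s_succ_mem by blast
  ultimately have "\<bar>u (s + 1 / real N - 1 / real N) x\<bar> \<le> B + \<bar>g (s + 1 / real N) x\<bar> / real N"
    using abs_scheme_backward_step_le[OF assms(1-3)] assms(9) by blast
  then show ?thesis by simp
qed

theorem mainTheorem8:
  fixes e :: "real^('n::finite option)^('n option)" and N :: nat and T :: real
    and h :: "real \<Rightarrow> real^'n \<Rightarrow> real^('n option)"
    and \<Psi> :: "real^'n \<Rightarrow> real" and g u :: "real \<Rightarrow> real^'n \<Rightarrow> real"
  assumes "orthogonal_matrix e" and "\<forall>j. 0 < e $ None $ j" and "0 < N"
    and "\<forall>t\<in>grid N \<inter> {0..<TN N T}. \<forall>x.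
           invertible (Hmat e N h (t + 1 / real N) x) \<and>
           (\<forall>i. 0 < (h t x v* matrix_inv (Hmat e N h (t + 1 / real N) x)) $ i) \<and>
           (\<Sum>i\<in>UNIV. (h t x v* matrix_inv (Hmat e N h (t + 1 / real N) x)) $ i) < 1"
    and "bounded (range \<Psi>)"
    and "bounded ((\<lambda>(s, y). g s y) ` ((grid N \<inter> {0<..TN N T}) \<times> UNIV))"
    and "\<forall>x. u (TN N T) x = \<Psi> x"
    and "\<forall>t\<in>grid N \<inter> {0<..TN N T}. \<forall>x.
           dt N u t x + (1/2) * lap e N u t x - bN e N h t x \<bullet> grad e N u t x
           - cN e N h t x * u (t - 1 / real N) x = g t x"
  shows "\<forall>t\<in>grid N \<inter> {0..TN N T}. \<forall>x.
           \<bar>u t x\<bar> \<le> (SUP y. \<bar>\<Psi> y\<bar>)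
             + (TN N T - t) * (SUP p\<in>(grid N \<inter> {t<..TN N T}) \<times> UNIV. \<bar>g (fst p) (snd p)\<bar>)"
proof (intro ballI allI)
  fix t x assume t: "t \<in> grid N \<inter> {0..TN N T}"
  obtain k M where tk: "t = real k / real N" and TM: "TN N T = real M / real N" and "k \<le> M"
    using grid_TN_index[OF assms(3) t] .
  define G where "G = (SUP p\<in>(grid N \<inter> {t<..TN N T}) \<times> UNIV. \<bar>g (fst p) (snd p)\<bar>)"
  have \<Psi>_le: "\<bar>\<Psi> y\<bar> \<le> (SUP y. \<bar>\<Psi> y\<bar>)" for y
    using abs_le_SUP_of_bounded[OF assms(5)] by blast
  have g_le: "\<bar>g s y\<bar> \<le> G" if "s \<in> grid N \<inter> {t<..TN N T}" for s y
    using abs_le_SUP_of_bounded[OF assms(6), of "(grid N \<inter> {t<..TN N T}) \<times> UNIV" "(s, y)"]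
      t that
    unfolding G_def by (force simp: case_prod_beta)
  have "\<bar>u (real j / real N) y\<bar> \<le> B + G / real N"
    if "k \<le> j" "j < M" "\<forall>y. \<bar>u (real (Suc j) / real N) y\<bar> \<le> B" for j B y
  proof -
    have succ: "real (Suc j) / real N = real j / real N + 1 / real N"
      by (simp add: add_divide_distrib)
    have Suc_mem: "real (Suc j) / real N \<in> grid N \<inter> {t<..TN N T}"
      using that(1,2) assms(3) unfolding TM tk
      by (simp add: of_nat_divide_mem_grid divide_le_cancel divide_less_cancel del: of_nat_Suc)
    then have "\<bar>g (real (Suc j) / real N) y\<bar> / real N \<le> G / real N"
      by (intro divide_right_mono g_le) auto
    moreover have "\<bar>u (real j / real N) y\<bar> \<le> B + \<bar>g (real (Suc j) / real N) y\<bar> / real N"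
      using abs_scheme_grid_step_le[OF assms(1-4,8) of_nat_divide_mem_grid] that(3)
        Suc_mem unfolding succ by simp
    ultimately show ?thesis by linarith
  qed
  then have "\<bar>u t x\<bar> \<le> (SUP y. \<bar>\<Psi> y\<bar>) + real (M - k) * (G / real N)"
    unfolding tk using \<open>k \<le> M\<close> assms(7) TM \<Psi>_le
    by (intro backward_recursion_bound[where v = "\<lambda>j. u (real j / real N)"]) auto
  also have "real (M - k) * (G / real N) = (TN N T - t) * G"
    using \<open>k \<le> M\<close> assms(3) unfolding TM tk by (simp add: of_nat_diff field_simps)
  finally show "\<bar>u t x\<bar> \<le> (SUP y. \<bar>\<Psi> y\<bar>) + (TN N T - t) * G" .
qed

end
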